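(* Let $0<a,b<1$, $f\ge3$, and let $\overline w_{m,n}$, $q^*_n(c)$, $w^*_n(c)$ be as in the context. Define the $2\times2$ matrices $$Q(b):=\begin{bmatrix}q^*_1(b)&w^*_1(b)\\ q^*_2(b)&w^*_2(b)\end{bmatrix},\qquad B:=\begin{bmatrix}\frac{b-a}{1-a}&\frac{1-b}{1-a}\\ \kappa(a,b)&\frac{1-b}{1-a}\beta(a,b)\end{bmatrix},\quad \kappa(a,b):=\frac{b-a}{1-a}\beta(a,b)-x(a,b),$$ let $M:=Q(b)^{-1}B$, and for $1\le\ell\le f$ let $\begin{bmatrix}d_1(\ell)\\ d_2(\ell)\end{bmatrix}:=M\begin{bmatrix}w^*_\ell(a)\\ w^*_{\ell+1}(a)\end{bmatrix}$. Then for all $1\le\ell\le f$ and $j\ge1$, $$\overline w_{f-\ell,f+j}=d_1(\ell)q^*_j(b)+d_2(\ell)w^*_j(b).$$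
   Context: Let $r,y,z$ be indeterminates. For $c\in(0,1)$: $\omega_c:=1-(1-c)^2r^2y^2z^2$, $\tau_c:=1+(1-c)^2r^2z^2y(1-y)$, $x_c:=c^2z^2\tau_c^2$, $\beta_c:=1+z^2(c^2-(1-c)^2r^2(y^2+c^2(1-y)^2z^2))$; $w^*_0(c):=(\beta_c-\omega_c)/x_c$, $w^*_1(c):=1$, $w^*_{n+1}(c):=\beta_cw^*_n(c)-x_cw^*_{n-1}(c)$ ($n\ge1$); $q^*_0(c):=-(1-y)(1+y+(1-c)^2r^2y^2z^2(1-y))/\tau_c^2$, $q^*_1(c):=y^2$, $q^*_{n+1}(c):=\beta_cq^*_n(c)-x_cq^*_{n-1}(c)$ ($n\ge1$). Also $\tau(a,b):=1+(1-a)(1-b)r^2z^2y(1-y)$, $x(a,b):=b^2z^2\tau(a,b)^2$, $\beta(a,b):=\beta_b-(b-a)b^2(1-b)r^2(1-y)^2z^4$. The upward array $\overline w_{m,n}$ ($0\le m<n$): $\overline w_{m,m+1}:=1$; for $n-m\ge2$: $\overline w_{m,m+\ell}:=w^*_\ell(a)$ if $m+\ell\le f$, $:=w^*_\ell(b)$ if $f\le m$; $\overline w_{f-\ell,f+1}:=\frac{1-b}{1-a}w^*_{\ell+1}(a)+\frac{b-a}{1-a}w^*_\ell(a)$ ($1\le\ell\le f$); $\overline w_{m,f+2}:=\beta(a,b)\overline w_{m,f+1}-x(a,b)\overline w_{m,f}$ ($m\le f-1$); $\overline w_{m,f+j+1}:=\beta_b\overline w_{m,f+j}-x_b\overline w_{m,f+j-1}$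 ($m\le f-1$, $j\ge2$). *)

theory Defs
  imports "HOL-Analysis.Analysis"
begin

text \<open>The indeterminates r, y, z are rendered as real parameters.\<close>

definition omega_c :: "real \<Rightarrow> real \<Rightarrow> real \<Rightarrow> real \<Rightarrow> real" where
  "omega_c r y z c = 1 - (1-c)^2 * r^2 * y^2 * z^2"

definition tau_c :: "real \<Rightarrow> real \<Rightarrow> real \<Rightarrow> real \<Rightarrow> real" where
  "tau_c r y z c = 1 + (1-c)^2 * r^2 * z^2 * y * (1-y)"

definition x_c :: "real \<Rightarrow> real \<Rightarrow> real \<Rightarrow> real \<Rightarrow> real" where
  "x_c r y z c = c^2 * z^2 * (tau_c r y z c)^2"

definition beta_c :: "real \<Rightarrow> real \<Rightarrow> real \<Rightarrow> real \<Rightarrow> real" where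
  "beta_c r y z c = 1 + z^2 * (c^2 - (1-c)^2 * r^2 * (y^2 + c^2 * (1-y)^2 * z^2))"

fun wstar :: "real \<Rightarrow> real \<Rightarrow> real \<Rightarrow> real \<Rightarrow> nat \<Rightarrow> real" where
  "wstar r y z c 0 = (beta_c r y z c - omega_c r y z c) / x_c r y z c"
| "wstar r y z c (Suc 0) = 1"
| "wstar r y z c (Suc (Suc n)) =
     beta_c r y z c * wstar r y z c (Suc n) - x_c r y z c * wstar r y z c n"

fun qstar :: "real \<Rightarrow> real \<Rightarrow> real \<Rightarrow> real \<Rightarrow> nat \<Rightarrow> real" where
  "qstar r y z c 0 = - (1-y) * (1 + y + (1-c)^2 * r^2 * y^2 * z^2 * (1-y)) / (tau_c r y z c)^2"
| "qstar r y z c (Suc 0) = y^2"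
| "qstar r y z c (Suc (Suc n)) =
     beta_c r y z c * qstar r y z c (Suc n) - x_c r y z c * qstar r y z c n"

definition tau_ab :: "real \<Rightarrow> real \<Rightarrow> real \<Rightarrow> real \<Rightarrow> real \<Rightarrow> real" where
  "tau_ab r y z a b = 1 + (1-a) * (1-b) * r^2 * z^2 * y * (1-y)"

definition x_ab :: "real \<Rightarrow> real \<Rightarrow> real \<Rightarrow> real \<Rightarrow> real \<Rightarrow> real" where
  "x_ab r y z a b = b^2 * z^2 * (tau_ab r y z a b)^2"

definition beta_ab :: "real \<Rightarrow> real \<Rightarrow> real \<Rightarrow> real \<Rightarrow> real \<Rightarrow> real" where
  "beta_ab r y z a b = beta_c r y z b - (b-a) * b^2 * (1-b) * r^2 * (1-y)^2 * z^4"

text \<open>Column m < f of the upward array beyond row f: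
  wup k = overline w_{m, f+k}; wup 0 = overline w_{m,f} = w*_{f-m}(a).\<close>
fun wup :: "real \<Rightarrow> real \<Rightarrow> real \<Rightarrow> real \<Rightarrow> real \<Rightarrow> nat \<Rightarrow> nat \<Rightarrow> nat \<Rightarrow> real" where
  "wup r y z a b f m 0 = wstar r y z a (f - m)"
| "wup r y z a b f m (Suc 0) =
     (1-b)/(1-a) * wstar r y z a (f - m + 1) + (b-a)/(1-a) * wstar r y z a (f - m)"
| "wup r y z a b f m (Suc (Suc 0)) =
     beta_ab r y z a b * wup r y z a b f m (Suc 0) - x_ab r y z a b * wup r y z a b f m 0"
| "wup r y z a b f m (Suc (Suc (Suc k))) =
     beta_c r y z b * wup r y z a b f m (Suc (Suc k)) - x_c r y z b * wup r y z a b f m (Suc k)"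

text \<open>The upward array overline w_{m,n}, meaningful for 0 \<le> m < n.\<close>
definition wbar :: "real \<Rightarrow> real \<Rightarrow> real \<Rightarrow> real \<Rightarrow> real \<Rightarrow> nat \<Rightarrow> nat \<Rightarrow> nat \<Rightarrow> real" where
  "wbar r y z a b f m n =
     (if n = m + 1 then 1
      else if n \<le> f then wstar r y z a (n - m)
      else if f \<le> m then wstar r y z b (n - m)
      else wup r y z a b f m (n - f))"

definition Qmat :: "real \<Rightarrow> real \<Rightarrow> real \<Rightarrow> real \<Rightarrow> real^2^2" where
  "Qmat r y z b = vector [vector [qstar r y z b 1, wstar r y z b 1],
                          vector [qstar r y z b 2, wstar r y z b 2]]"

definition kappa :: "real \<Rightarrow> real \<Rightarrow> real \<Rightarrow> real \<Rightarrow> real \<Rightarrow> real" where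
  "kappa r y z a b = (b-a)/(1-a) * beta_ab r y z a b - x_ab r y z a b"

definition Bmat :: "real \<Rightarrow> real \<Rightarrow> real \<Rightarrow> real \<Rightarrow> real \<Rightarrow> real^2^2" where
  "Bmat r y z a b = vector [vector [(b-a)/(1-a), (1-b)/(1-a)],
                            vector [kappa r y z a b, (1-b)/(1-a) * beta_ab r y z a b]]"

definition dvec :: "real \<Rightarrow> real \<Rightarrow> real \<Rightarrow> real \<Rightarrow> real \<Rightarrow> nat \<Rightarrow> real^2" where
  "dvec r y z a b l = (matrix_inv (Qmat r y z b) ** Bmat r y z a b)
                        *v vector [wstar r y z a l, wstar r y z a (l+1)]"

end

theory Submission
  imports Defs
begin

text \<open>Beyond row f+2 the column m = f - l of the upward array obeys the three-term recurrence
  of w*(b) and q*(b), so it is the combination d_1 q*(b) + d_2 w*(b) determined by its entries in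
  rows f+1 and f+2. Those two entries are B applied to (w*_l(a), w*_{l+1}(a)), and M = Q(b)^{-1} B
  converts them into the coefficients (d_1, d_2).\<close>

lemma matrix_vector_mult_2_nth:
  fixes A :: "'a::comm_semiring_1^2^2" and v :: "'a^2"
  shows "(A *v v) $ 1 = A$1$1 * v$1 + A$1$2 * v$2"
    and "(A *v v) $ 2 = A$2$1 * v$1 + A$2$2 * v$2"
  by (simp_all add: matrix_vector_mult_def sum_2)

lemma matrix_mul_matrix_inv:
  fixes A :: "'a::semiring_1^'n^'n"
  assumes "invertible A"
  shows "A ** matrix_inv A = mat 1"
  using assms unfolding invertible_def matrix_inv_def by (metis (mono_tags, lifting) someI_ex)

lemma matrix_vector_mult_matrix_inv_cancel:
  fixes A :: "'a::semiring_1^'n^'n"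
  assumes "invertible A"
  shows "A *v (matrix_inv A *v v) = v"
  by (simp add: matrix_vector_mul_assoc matrix_mul_matrix_inv[OF assms])

lemma recurrence_eq_linear_combination:
  fixes u p q :: "nat \<Rightarrow> 'a::comm_ring"
  assumes rec_u: "\<And>k. u (Suc (Suc (Suc k))) = \<beta> * u (Suc (Suc k)) - x * u (Suc k)"
    and rec_p: "\<And>k. p (Suc (Suc (Suc k))) = \<beta> * p (Suc (Suc k)) - x * p (Suc k)"
    and rec_q: "\<And>k. q (Suc (Suc (Suc k))) = \<beta> * q (Suc (Suc k)) - x * q (Suc k)"
    and init1: "u 1 = c\<^sub>1 * p 1 + c\<^sub>2 * q 1"
    and init2: "u 2 = c\<^sub>1 * p 2 + c\<^sub>2 * q 2"
    and "j \<ge> 1"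
  shows "u j = c\<^sub>1 * p j + c\<^sub>2 * q j"
proof -
  have "u (Suc k) = c\<^sub>1 * p (Suc k) + c\<^sub>2 * q (Suc k)
      \<and> u (Suc (Suc k)) = c\<^sub>1 * p (Suc (Suc k)) + c\<^sub>2 * q (Suc (Suc k))" for k
  proof (induction k)
    case 0
    then show ?case using init1 init2 by (simp add: numeral_2_eq_2)
  next
    case (Suc k)
    then show ?case by (simp add: rec_u rec_p rec_q algebra_simps)
  qed
  moreover obtain k where "j = Suc k" using \<open>j \<ge> 1\<close> by (cases j) auto
  ultimately show ?thesis by simp
qed

lemma wbar_eq_wup:
  assumes "m < f" "f < n"
  shows "wbar r y z a b f m n = wup r y z a b f m (n - f)"
  using assms by (simp add: wbar_def)

lemma wup_initial_eq_Bmat: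
  fixes r y z a b :: real and f m :: nat
  shows "wup r y z a b f m 1
           = (Bmat r y z a b *v vector [wstar r y z a (f - m), wstar r y z a (f - m + 1)]) $ 1"
    and "wup r y z a b f m 2
           = (Bmat r y z a b *v vector [wstar r y z a (f - m), wstar r y z a (f - m + 1)]) $ 2"
  by (simp_all add: matrix_vector_mult_2_nth Bmat_def kappa_def numeral_2_eq_2 algebra_simps)

lemma Qmat_mult_dvec:
  assumes "det (Qmat r y z b) \<noteq> 0"
  shows "Qmat r y z b *v dvec r y z a b l
           = Bmat r y z a b *v vector [wstar r y z a l, wstar r y z a (l+1)]"
  using assms
  by (simp add: dvec_def matrix_vector_mul_assoc[symmetric] invertible_det_nz
      matrix_vector_mult_matrix_inv_cancel)

theorem proposition3:
  fixes r y z a b :: real and f l j :: nat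
  assumes "0 < a" "a < 1" "0 < b" "b < 1" "f \<ge> 3"
    and "z \<noteq> 0" "tau_c r y z a \<noteq> 0" "tau_c r y z b \<noteq> 0"
    and "det (Qmat r y z b) \<noteq> 0"
    and "1 \<le> l" "l \<le> f" "j \<ge> 1"
  shows "wbar r y z a b f (f - l) (f + j) =
           dvec r y z a b l $ 1 * qstar r y z b j + dvec r y z a b l $ 2 * wstar r y z b j"
proof -
  define d where "d = dvec r y z a b l"
  define u where "u = wup r y z a b f (f - l)"
  have fl: "f - (f - l) = l" using \<open>l \<le> f\<close> by simp
  have Qd: "Qmat r y z b *v d = Bmat r y z a b *v vector [wstar r y z a l, wstar r y z a (l+1)]"
    using Qmat_mult_dvec[OF assms(9)] by (simp add: d_def)
  have "u 1 = (Qmat r y z b *v d) $ 1" and "u 2 = (Qmat r y z b *v d) $ 2"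
    using wup_initial_eq_Bmat[of r y z a b f "f - l"] by (simp_all only: Qd u_def fl)
  then have "u 1 = d$1 * qstar r y z b 1 + d$2 * wstar r y z b 1"
    and "u 2 = d$1 * qstar r y z b 2 + d$2 * wstar r y z b 2"
    by (simp_all add: matrix_vector_mult_2_nth Qmat_def mult.commute)
  moreover have "u (Suc (Suc (Suc k))) = beta_c r y z b * u (Suc (Suc k)) - x_c r y z b * u (Suc k)"
    for k by (simp add: u_def)
  ultimately have "u j = d$1 * qstar r y z b j + d$2 * wstar r y z b j"
    using recurrence_eq_linear_combination[of u "beta_c r y z b" "x_c r y z b" "qstar r y z b"
        "wstar r y z b" "d$1" "d$2" j] \<open>j \<ge> 1\<close>
    by simp
  moreover have "wbar r y z a b f (f - l) (f + j) = u j"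
    using assms by (simp add: wbar_eq_wup u_def)
  ultimately show ?thesis by (simp add: d_def)
qed

end
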